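(* There is a deterministic algorithm for the Locate problem that runs in $k$ rounds and asks at most $k\,n^{1/k}$ rank queries on every input of length $n$.
   Context: Locate problem in the rank query model: there is a vector $\vec{x}=(x_1,\ldots,x_n)$ whose ranks form an unknown permutation of $\{1,\ldots,n\}$; an index $i$ is given and the goal is to determine $\mathrm{rank}(x_i)$. Queries have the form "How is $\mathrm{rank}(x_j)$ compared to $m$?" ($j,m\in\{1,\ldots,n\}$), with answer "$<$", "$=$" or "$>$". An algorithm runs in $k$ rounds if in each of $k$ rounds it submits a set of queries chosen depending only on answers of earlier rounds, then receives all their answers. *)

theory Defs
  imports Complex_Main
begin

text \<open>Rank query model. The ranks of x_1..x_n are given by a permutation
  rk of {1..n}: rk j = rank(x_j). A query (j,m) asks how rank(x_j) compares to m.\<close>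

datatype answer = Ans_Less | Ans_Equal | Ans_Greater

type_synonym query = "nat \<times> nat"

definition ans :: "(nat \<Rightarrow> nat) \<Rightarrow> query \<Rightarrow> answer" where
  "ans rk q = (if rk (fst q) < snd q then Ans_Less
               else if rk (fst q) = snd q then Ans_Equal else Ans_Greater)"

type_synonym transcript = "(query \<times> answer) set list"

type_synonym strategy = "transcript \<Rightarrow> query set"

fun run :: "strategy \<Rightarrow> (nat \<Rightarrow> nat) \<Rightarrow> nat \<Rightarrow> transcript" where
  "run S rk 0 = []"
| "run S rk (Suc r) = (let h = run S rk r in h @ [(\<lambda>q. (q, ans rk q)) ` S h])"

definition num_queries :: "strategy \<Rightarrow> (nat \<Rightarrow> nat) \<Rightarrow> nat \<Rightarrow> nat" where
  "num_queries S rk k = (\<Sum>r<k. card (S (run S rk r)))"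

definition valid_strategy :: "nat \<Rightarrow> strategy \<Rightarrow> bool" where
  "valid_strategy n S = (\<forall>h. S h \<subseteq> {1..n} \<times> {1..n})"

definition locate_alg :: "nat \<Rightarrow> nat \<Rightarrow> nat \<Rightarrow> real \<Rightarrow> strategy \<Rightarrow> (transcript \<Rightarrow> nat) \<Rightarrow> bool" where
  "locate_alg n i k B S out =
     (valid_strategy n S \<and>
      (\<forall>rk. bij_betw rk {1..n} {1..n} \<longrightarrow>
          out (run S rk k) = rk i \<and> real (num_queries S rk k) \<le> B))"

end

theory Submission
  imports Defs
begin

text \<open>Let \<open>b = \<lceil>n powr (1/k)\<rceil>\<close>, so that \<open>n \<le> b ^ k\<close>, and write \<open>rank(x_i) - 1\<close> in base \<open>b\<close>
  with \<open>k\<close> digits. Round \<open>r\<close> reveals the \<open>r\<close>-th most significant digit: knowing the lower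
  bound \<open>lo\<close> fixed by the earlier digits, it compares \<open>rank(x_i)\<close> with the \<open>b - 1\<close> grid
  points \<open>lo + t * b ^ (k - r - 1)\<close>, and the number of answers that are not "<" is the digit.
  This costs at most \<open>k * (b - 1) \<le> k * n powr (1/k)\<close> queries.\<close>

definition count_not_less :: "(query \<times> answer) set \<Rightarrow> nat" where
  "count_not_less R = card {q. \<exists>a. (q, a) \<in> R \<and> a \<noteq> Ans_Less}"

definition lower_bound :: "nat \<Rightarrow> nat \<Rightarrow> transcript \<Rightarrow> nat" where
  "lower_bound k b h = 1 + (\<Sum>r<length h. b ^ (k - Suc r) * count_not_less (h ! r))"

definition grid_queries :: "nat \<Rightarrow> nat \<Rightarrow> nat \<Rightarrow> nat \<Rightarrow> nat \<Rightarrow> query set" where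
  "grid_queries n i b lo d = (\<lambda>t. (i, lo + t * d)) ` {t \<in> {1..<b}. lo + t * d \<le> n}"

definition digit_strategy :: "nat \<Rightarrow> nat \<Rightarrow> nat \<Rightarrow> nat \<Rightarrow> strategy" where
  "digit_strategy n i k b h = grid_queries n i b (lower_bound k b h) (b ^ (k - Suc (length h)))"

lemma length_run [simp]: "length (run S rk r) = r"
  by (induction r) (simp_all add: Let_def)

lemma lower_bound_snoc:
  "lower_bound k b (h @ [R]) = lower_bound k b h + b ^ (k - Suc (length h)) * count_not_less R"
  unfolding lower_bound_def by (simp add: nth_append)

lemma card_grid_queries_le: "card (grid_queries n i b lo d) \<le> b - 1"
proof -
  have "card (grid_queries n i b lo d) \<le> card {t \<in> {1..<b}. lo + t * d \<le> n}"
    unfolding grid_queries_def by (rule card_image_le) simp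
  also have "\<dots> \<le> card {1..<b}"
    by (rule card_mono) auto
  finally show ?thesis
    by simp
qed

lemma grid_queries_subset:
  assumes "i \<in> {1..n}" and "0 < d"
  shows "grid_queries n i b lo d \<subseteq> {1..n} \<times> {1..n}"
  using assms unfolding grid_queries_def by (auto simp: Suc_le_eq)

lemma count_not_less_answers:
  "count_not_less ((\<lambda>q. (q, ans rk q)) ` Q) = card {(j, m) \<in> Q. m \<le> rk j}"
  unfolding count_not_less_def ans_def
  by (rule arg_cong[where f = card]) (auto split: if_splits)

lemma count_not_less_grid_queries:
  assumes "0 < d"
  shows "count_not_less ((\<lambda>q. (q, ans rk q)) ` grid_queries n i b lo d)
           = card {t \<in> {1..<b}. lo + t * d \<le> n \<and> lo + t * d \<le> rk i}"
proof -
  have "{(j, m) \<in> grid_queries n i b lo d. m \<le> rk j}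
          = (\<lambda>t. (i, lo + t * d)) ` {t \<in> {1..<b}. lo + t * d \<le> n \<and> lo + t * d \<le> rk i}"
    unfolding grid_queries_def by auto
  moreover have "inj (\<lambda>t. (i, lo + t * d))"
    using assms by (auto intro: injI)
  ultimately show ?thesis
    unfolding count_not_less_answers by (simp add: card_image inj_on_subset)
qed

lemma card_grid_points_below:
  fixes q b d :: nat
  assumes "0 < b" and "0 < d"
  shows "card {t \<in> {1..<b}. q div (b * d) * (b * d) + t * d \<le> q} = q div d mod b"
proof -
  define p where "p = q div d"
  have "q div (b * d) = p div b"
    unfolding p_def using div_mult2_eq[of q d b] by (simp add: mult.commute)
  then have "q div (b * d) * (b * d) + t * d \<le> q \<longleftrightarrow> p div b * b + t \<le> p" for t
    using assms unfolding p_def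
    by (simp add: less_eq_div_iff_mult_less_eq add_mult_distrib mult.assoc)
  also have "p div b * b + t \<le> p \<longleftrightarrow> t \<le> p mod b" for t
    using div_mult_mod_eq[of p b] by linarith
  finally have "{t \<in> {1..<b}. q div (b * d) * (b * d) + t * d \<le> q} = {t \<in> {1..<b}. t \<le> p mod b}"
    by blast
  also have "\<dots> = {1..p mod b}"
    using mod_less_divisor[OF assms(1), of p] by auto
  finally show ?thesis
    unfolding p_def by simp
qed

lemma div_mult_mult_add_digit:
  fixes q b d :: nat
  shows "q div (b * d) * (b * d) + d * (q div d mod b) = q div d * d"
proof -
  have "q div (b * d) = q div d div b"
    using div_mult2_eq[of q d b] by (simp add: mult.commute)
  then have "q div (b * d) * (b * d) + d * (q div d mod b) = d * (q div d div b * b + q div d mod b)"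
    by (simp only: distrib_left ac_simps)
  also have "\<dots> = q div d * d"
    unfolding div_mult_mod_eq by (rule mult.commute)
  finally show ?thesis .
qed

lemma lower_bound_run_digit_strategy:
  assumes "0 < b" and "n \<le> b ^ k" and "rk i = q + 1" and "q + 1 \<le> n" and "r \<le> k"
  shows "lower_bound k b (run (digit_strategy n i k b) rk r) = 1 + q div b ^ (k - r) * b ^ (k - r)"
  using \<open>r \<le> k\<close>
proof (induction r)
  case 0
  have "q < b ^ k"
    using assms(2-4) by linarith
  then show ?case
    by (simp add: lower_bound_def)
next
  case (Suc r)
  define h where "h = run (digit_strategy n i k b) rk r"
  define d where "d = b ^ (k - Suc r)"
  have "0 < d"
    using \<open>0 < b\<close> unfolding d_def by simp
  have b_d: "b ^ (k - r) = b * d"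
    using Suc.prems unfolding d_def by (simp add: Suc_diff_Suc Suc_le_eq flip: power_Suc)
  have lower_h: "lower_bound k b h = 1 + q div (b * d) * (b * d)"
    using Suc unfolding h_def b_d by simp
  have "digit_strategy n i k b h = grid_queries n i b (1 + q div (b * d) * (b * d)) d"
    unfolding digit_strategy_def lower_h by (simp add: h_def d_def)
  then have "count_not_less ((\<lambda>q. (q, ans rk q)) ` digit_strategy n i k b h)
      = card {t \<in> {1..<b}. 1 + q div (b * d) * (b * d) + t * d \<le> n
                            \<and> 1 + q div (b * d) * (b * d) + t * d \<le> q + 1}"
    using count_not_less_grid_queries[OF \<open>0 < d\<close>] assms(3) by simp
  also have "\<dots> = card {t \<in> {1..<b}. q div (b * d) * (b * d) + t * d \<le> q}"
    using assms(4) by (intro arg_cong[where f = card]) auto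
  also have "\<dots> = q div d mod b"
    using card_grid_points_below[OF \<open>0 < b\<close> \<open>0 < d\<close>] .
  finally have "lower_bound k b (run (digit_strategy n i k b) rk (Suc r))
                  = 1 + (q div (b * d) * (b * d) + d * (q div d mod b))"
    by (simp add: Let_def lower_bound_snoc lower_h flip: h_def) (simp add: h_def d_def)
  then show ?case
    by (simp add: div_mult_mult_add_digit d_def)
qed

lemma lower_bound_run_digit_strategy_eq_rank:
  assumes "0 < b" and "n \<le> b ^ k" and "rk i \<in> {1..n}"
  shows "lower_bound k b (run (digit_strategy n i k b) rk k) = rk i"
proof -
  have "lower_bound k b (run (digit_strategy n i k b) rk k) = 1 + (rk i - 1) div b ^ (k - k) * b ^ (k - k)"
    using assms(3) by (intro lower_bound_run_digit_strategy[OF assms(1,2)]) auto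
  then show ?thesis
    using assms(3) by simp
qed

lemma num_queries_digit_strategy_le: "num_queries (digit_strategy n i k b) rk r \<le> r * (b - 1)"
  unfolding num_queries_def digit_strategy_def
  using sum_bounded_above[where K = "b - 1" and A = "{..<r}"] card_grid_queries_le by simp

lemma exists_base_power_covering:
  fixes k n :: nat
  assumes "1 \<le> k" and "1 \<le> n"
  obtains b :: nat where "0 < b" and "n \<le> b ^ k" and "real (b - 1) \<le> real n powr (1 / real k)"
proof
  define x where "x = real n powr (1 / real k)"
  have "0 < x"
    unfolding x_def using assms by simp
  show "0 < nat \<lceil>x\<rceil>"
    using \<open>0 < x\<close> by simp
  have "real n = x ^ k"
    unfolding x_def using assms by (simp add: powr_realpow[symmetric] powr_powr)
  also have "\<dots> \<le> real (nat \<lceil>x\<rceil>) ^ k"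
    using \<open>0 < x\<close> by (intro power_mono) linarith+
  finally show "n \<le> nat \<lceil>x\<rceil> ^ k"
    by (metis of_nat_le_iff of_nat_power)
  show "real (nat \<lceil>x\<rceil> - 1) \<le> x"
    using \<open>0 < x\<close> by (simp add: of_nat_diff) linarith
qed

theorem proposition1:
  fixes k n i :: nat
  assumes "k \<ge> 1" and "i \<in> {1..n}"
  shows "\<exists>S out. locate_alg n i k (real k * real n powr (1 / real k)) S out"
proof -
  have "1 \<le> n"
    using assms(2) by simp
  obtain b where "0 < b" and "n \<le> b ^ k" and b_le: "real (b - 1) \<le> real n powr (1 / real k)"
    using exists_base_power_covering[OF assms(1) \<open>1 \<le> n\<close>] by blast
  let ?S = "digit_strategy n i k b"
  have "valid_strategy n ?S"
    unfolding valid_strategy_def digit_strategy_def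
    using grid_queries_subset \<open>0 < b\<close> assms(2) by simp
  moreover have "lower_bound k b (run ?S rk k) = rk i" if "bij_betw rk {1..n} {1..n}" for rk
    using lower_bound_run_digit_strategy_eq_rank[OF \<open>0 < b\<close> \<open>n \<le> b ^ k\<close>]
      bij_betwE[OF that] assms(2) by blast
  moreover have "real (num_queries ?S rk k) \<le> real k * real n powr (1 / real k)" for rk
  proof -
    have "real (num_queries ?S rk k) \<le> real k * real (b - 1)"
      using num_queries_digit_strategy_le[of n i k b rk k] by (metis of_nat_le_iff of_nat_mult)
    also have "\<dots> \<le> real k * real n powr (1 / real k)"
      using b_le by (simp add: mult_left_mono)
    finally show ?thesis .
  qed
  ultimately show ?thesis
    unfolding locate_alg_def by blast
qed

end
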